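(* Let $H:\mathbb{A}\to\mathbb{A}$ be a homeomorphism, $\Psi\subset\mathbb{A}$ a closed set with $H(\Psi)=\Psi$, $\tilde\Psi=q^{-1}(\Psi)$ and $\tilde H$ a lift of $H$ to $[0,1]\times\mathbb{R}$. If $H|_\Psi$ is uniformly rigid and $\tilde\Psi$ is connected, then there is a well defined rotation number $\alpha$ common to all points of $\Psi$: there is $\alpha\in\mathbb{R}$ with $\lim_{n\to\infty}\frac{\pi_2(\tilde H^n(y))-\pi_2(y)}{n}=\alpha$ for every $y\in\tilde\Psi$.
   Context: $\mathbb{A}=[0,1]\times\mathbb{R}/\mathbb{Z}$, $q:[0,1]\times\mathbb{R}\to\mathbb{A}$, $q(t,r)=(t,r+\mathbb{Z})$, is the universal covering, $\mathbb{A}$ carries the metric making $q$ a local isometry, a lift $\tilde H$ satisfies $q\circ\tilde H=H\circ q$, and $\pi_2(t,r)=r$. A homeomorphism $T:Y\to Y$ is uniformly rigid if $T^{n_i}\to\mathrm{id}_Y$ uniformly for some sequence $n_i\nearrow\infty$. *)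

theory Defs
  imports "HOL-Analysis.Analysis"
begin

text \<open>The closed annulus A = [0,1] x R/Z is represented by the set
  [0,1] x [0,1) of pairs (t, r), the second coordinate being the
  representative of r + Z in [0,1).  The covering map is q(t,r) = (t, frac r).\<close>

definition annulus :: "(real \<times> real) set" where
  "annulus = {0..1} \<times> {0..<1}"

definition ann_q :: "real \<times> real \<Rightarrow> real \<times> real" where
  "ann_q = (\<lambda>(t, r). (t, frac r))"

definition circ_dist :: "real \<Rightarrow> real \<Rightarrow> real" where
  "circ_dist x y = \<bar>(x - y) - of_int (round (x - y))\<bar>"

lemma circ_dist_commute: "circ_dist x y = circ_dist y x"
proof -
  have "circ_dist x y \<le> circ_dist y x"
    using round_diff_minimal[of "x - y" "- round (y - x)"]
    unfolding circ_dist_def by (simp add: abs_minus_commute)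
  moreover have "circ_dist y x \<le> circ_dist x y"
    using round_diff_minimal[of "y - x" "- round (x - y)"]
    unfolding circ_dist_def by (simp add: abs_minus_commute)
  ultimately show ?thesis by simp
qed

lemma circ_dist_triangle: "circ_dist x z \<le> circ_dist x y + circ_dist y z"
proof -
  have "circ_dist x z \<le> \<bar>(x - z) - of_int (round (x - y) + round (y - z))\<bar>"
    unfolding circ_dist_def by (rule round_diff_minimal)
  also have "\<dots> \<le> circ_dist x y + circ_dist y z"
    unfolding circ_dist_def by simp
  finally show ?thesis .
qed

lemma circ_dist_zero:
  assumes "x \<in> {0..<1}" "y \<in> {0..<1}" "circ_dist x y = 0"
  shows "x = y"
proof -
  have e: "x - y = of_int (round (x - y))" using assms(3) by (simp add: circ_dist_def)
  have "\<bar>x - y\<bar> < 1" using assms(1,2) by auto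
  then have "\<bar>of_int (round (x - y)) :: real\<bar> < 1" using e by simp
  then have "round (x - y) = 0" by linarith
  then show ?thesis using e by simp
qed

lemma Metric_space_circ: "Metric_space {0..<1} circ_dist"
  by unfold_locales
    (auto simp: circ_dist_commute circ_dist_triangle circ_dist_zero,
     auto simp: circ_dist_def)

text \<open>The flat metric on the annulus making q a local isometry.\<close>
definition ann_metric :: "(real \<times> real) metric" where
  "ann_metric = prod_metric (submetric euclidean_metric {0..1}) (metric ({0..<1}, circ_dist))"

lemma mspace_ann_metric: "mspace ann_metric = annulus"
  by (simp add: ann_metric_def annulus_def Metric_space.mspace_metric[OF Metric_space_circ])

definition ann_dist :: "real \<times> real \<Rightarrow> real \<times> real \<Rightarrow> real" where
  "ann_dist = mdist ann_metric"

definition ann_top :: "(real \<times> real) topology" where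
  "ann_top = mtopology_of ann_metric"

definition uniformly_rigid_on :: "(real \<times> real) set \<Rightarrow> (real \<times> real \<Rightarrow> real \<times> real) \<Rightarrow> bool" where
  "uniformly_rigid_on Y T \<longleftrightarrow>
     (\<exists>n :: nat \<Rightarrow> nat. strict_mono n \<and>
        (\<forall>\<epsilon>>0. \<forall>\<^sub>F i in sequentially. \<forall>y\<in>Y. ann_dist ((T ^^ n i) y) y < \<epsilon>))"

end

theory Submission
  imports Defs
begin

text \<open>The displacement D n y = \<pi>2(Ht^n y) - \<pi>2(y) is an additive cocycle over the lift.
  Uniform rigidity gives some N for which D N is uniformly close to an integer on the
  lifted set; as D N is continuous and the lifted set is connected, this integer m does not
  depend on the point.  Cutting n into blocks of length N then shows that D n y / n lies
  eventually within a small error of m / N, uniformly in y, and such uniform approximate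
  limits force one common limit.\<close>

lemma round_add_of_int [simp]: "round (x + of_int k) = round x + k"
  by (rule round_unique) (use of_int_round_gt[of x] of_int_round_le[of x] in auto)

lemma circ_dist_frac [simp]: "circ_dist (frac a) (frac b) = circ_dist a b"
proof -
  have eq: "frac a - frac b = (a - b) + of_int (\<lfloor>b\<rfloor> - \<lfloor>a\<rfloor>)"
    by (simp add: frac_def)
  show ?thesis
    unfolding circ_dist_def eq round_add_of_int by simp
qed

lemma circ_dist_snd_le_ann_dist: "circ_dist (snd p) (snd p') \<le> ann_dist p p'"
proof -
  have mdist_circ: "mdist (metric ({0..<1}, circ_dist)) = circ_dist"
    using Metric_space.mdist_metric[OF Metric_space_circ] .
  have "c \<le> sqrt (x\<^sup>2 + c\<^sup>2)" for x c :: real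
    using real_sqrt_le_mono[of "c\<^sup>2" "x\<^sup>2 + c\<^sup>2"] by simp
  then show ?thesis
    by (cases p, cases p') (simp add: ann_dist_def ann_metric_def prod_dist_def mdist_circ)
qed

lemma snd_ann_q: "snd (ann_q x) = frac (snd x)"
  by (cases x) (simp add: ann_q_def)

lemma funpow_image_subset:
  assumes "f ` S \<subseteq> S" "x \<in> S"
  shows "(f ^^ n) x \<in> S"
  by (induction n) (use assms in auto)

lemma continuous_on_funpow:
  assumes "continuous_on S f" "f ` S \<subseteq> S"
  shows "continuous_on S (f ^^ n)"
proof (induction n)
  case (Suc n)
  have "continuous_on ((f ^^ n) ` S) f"
    using assms funpow_image_subset[OF assms(2)] by (blast intro: continuous_on_subset)
  with Suc show ?case
    using continuous_on_compose by (simp add: comp_def)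
qed simp

lemma funpow_lift:
  assumes "f ` S \<subseteq> S" "\<And>y. y \<in> S \<Longrightarrow> q (f y) = g (q y)" "x \<in> S"
  shows "q ((f ^^ n) x) = (g ^^ n) (q x)"
  by (induction n) (simp_all add: assms funpow_image_subset)

lemma uniformly_rigid_lift_near_integer:
  assumes "uniformly_rigid_on \<Psi> H" "Ht ` S \<subseteq> S" "\<And>y. y \<in> S \<Longrightarrow> ann_q (Ht y) = H (ann_q y)"
    and "\<delta> > 0"
  obtains N where "N \<ge> 1"
    "\<And>w. w \<in> S \<Longrightarrow> ann_q w \<in> \<Psi> \<Longrightarrow> circ_dist (snd ((Ht ^^ N) w)) (snd w) < \<delta>"
proof -
  obtain k :: "nat \<Rightarrow> nat" where k: "strict_mono k"
    and "\<forall>\<^sub>F i in sequentially. \<forall>y\<in>\<Psi>. ann_dist ((H ^^ k i) y) y < \<delta>"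
    using assms(1,4) unfolding uniformly_rigid_on_def by blast
  then obtain i where i: "i \<ge> 1" "\<forall>y\<in>\<Psi>. ann_dist ((H ^^ k i) y) y < \<delta>"
    unfolding eventually_sequentially by (meson order_refl le_cases)
  show thesis
  proof
    show "k i \<ge> 1"
      using seq_suble[OF k, of i] i(1) by simp
    fix w assume "w \<in> S" "ann_q w \<in> \<Psi>"
    have "circ_dist (snd ((Ht ^^ k i) w)) (snd w)
        = circ_dist (snd (ann_q ((Ht ^^ k i) w))) (snd (ann_q w))"
      by (simp add: snd_ann_q)
    also have "\<dots> \<le> ann_dist ((H ^^ k i) (ann_q w)) (ann_q w)"
      using circ_dist_snd_le_ann_dist funpow_lift[where q = ann_q, OF assms(2,3) \<open>w \<in> S\<close>] by simp
    also have "\<dots> < \<delta>"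
      using i(2) \<open>ann_q w \<in> \<Psi>\<close> by blast
    finally show "circ_dist (snd ((Ht ^^ k i) w)) (snd w) < \<delta>" .
  qed
qed

lemma round_le_of_connected_image:
  fixes g :: "'a \<Rightarrow> real"
  assumes conn: "connected (g ` P)" and near: "\<forall>w\<in>P. \<bar>g w - of_int (round (g w))\<bar> < 1/2"
    and "u \<in> P" "v \<in> P"
  shows "round (g v) \<le> round (g u)"
proof (rule ccontr)
  assume "\<not> round (g v) \<le> round (g u)"
  define c where "c = of_int (round (g u)) + (1/2 :: real)"
  have "of_int (round (g u)) + 1 \<le> (of_int (round (g v)) :: real)"
    using \<open>\<not> round (g v) \<le> round (g u)\<close> by simp
  moreover have "\<bar>g u - of_int (round (g u))\<bar> < 1/2" "\<bar>g v - of_int (round (g v))\<bar> < 1/2"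
    using near \<open>u \<in> P\<close> \<open>v \<in> P\<close> by auto
  ultimately have "g u < c" "c \<le> g v"
    unfolding c_def by linarith+
  then have "c \<in> g ` P"
    using connected_contains_Icc[OF conn, of "g u" "g v"] \<open>u \<in> P\<close> \<open>v \<in> P\<close> by auto
  then have near_c: "\<bar>c - of_int (round c)\<bar> < 1/2"
    using near by auto
  have half: "\<bar>c - of_int z\<bar> \<ge> 1/2" for z
  proof (cases "z \<le> round (g u)")
    case True
    then have "of_int z \<le> (of_int (round (g u)) :: real)" by simp
    then show ?thesis unfolding c_def by simp
  next
    case False
    then have "of_int z \<ge> (of_int (round (g u)) + 1 :: real)" by simp
    then show ?thesis unfolding c_def by simp
  qed
  show False
    using near_c half[of "round c"] by linarith
qed

lemma connected_image_near_integer: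
  fixes g :: "'a \<Rightarrow> real"
  assumes "connected (g ` P)" "\<forall>w\<in>P. \<bar>g w - of_int (round (g w))\<bar> < \<delta>" "\<delta> \<le> 1/2"
  obtains m :: int where "\<forall>w\<in>P. \<bar>g w - of_int m\<bar> < \<delta>"
proof (cases "P = {}")
  case False
  then obtain u where "u \<in> P" by auto
  have "\<forall>w\<in>P. \<bar>g w - of_int (round (g w))\<bar> < 1/2"
    using assms(2,3) by fastforce
  then have "\<forall>w\<in>P. round (g w) = round (g u)"
    using round_le_of_connected_image[OF assms(1)] \<open>u \<in> P\<close> by (meson order_antisym)
  with assms(2) that show thesis by force
qed simp

lemma cocycle_average_approx:
  fixes D :: "nat \<Rightarrow> 'a \<Rightarrow> real"
  assumes cocycle: "\<And>a b y. D (a + b) y = D a ((T ^^ b) y) + D b y"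
    and inv: "T ` P \<subseteq> P" and N: "N \<ge> 1" and block: "\<forall>w\<in>P. \<bar>D N w - m\<bar> \<le> \<epsilon>"
    and "y \<in> P" "\<epsilon> > 0"
  shows "\<forall>\<^sub>F n in sequentially. \<bar>D n y / n - m / N\<bar> \<le> 2 * \<epsilon>"
proof -
  have blocks: "\<bar>D (k * N) w - k * m\<bar> \<le> k * \<epsilon>" if "w \<in> P" for k w
  proof (induction k)
    case 0
    show ?case using cocycle[of 0 0 w] by simp
  next
    case (Suc k)
    have "\<bar>D N ((T ^^ (k * N)) w) - m\<bar> \<le> \<epsilon>"
      using block funpow_image_subset[OF inv that] by blast
    with Suc show ?case
      using cocycle[of N "k * N" w] by (simp add: algebra_simps)
  qed
  define C where "C = (\<Sum>j<N. \<bar>D j y\<bar>) + \<bar>m\<bar>"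
  have bound: "\<bar>D n y - n * m / N\<bar> \<le> n * \<epsilon> + C" for n
  proof -
    define k j where "k = n div N" and "j = n mod N"
    have n: "n = k * N + j" and "j < N"
      using N by (simp_all add: k_def j_def)
    have "D n y = D (k * N) ((T ^^ j) y) + D j y"
      unfolding n by (rule cocycle)
    then have split: "D n y - n * m / N = (D (k * N) ((T ^^ j) y) - k * m) + (D j y - j * m / N)"
      using N by (simp add: n field_simps)
    have "k \<le> n"
      using N by (simp add: n trans_le_add1)
    have "\<bar>D n y - n * m / N\<bar>
        \<le> \<bar>D (k * N) ((T ^^ j) y) - k * m\<bar> + \<bar>D j y - j * m / N\<bar>"
      unfolding split by (rule abs_triangle_ineq)
    also have "\<dots> \<le> k * \<epsilon> + (\<bar>D j y\<bar> + \<bar>j * m / N\<bar>)"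
      by (intro add_mono blocks funpow_image_subset[OF inv \<open>y \<in> P\<close>] abs_triangle_ineq4)
    also have "\<dots> \<le> n * \<epsilon> + C"
    proof (intro add_mono)
      show "k * \<epsilon> \<le> n * \<epsilon>"
        using \<open>k \<le> n\<close> \<open>\<epsilon> > 0\<close> by simp
      have "\<bar>D j y\<bar> \<le> (\<Sum>j<N. \<bar>D j y\<bar>)"
        using \<open>j < N\<close> by (intro member_le_sum) auto
      moreover have "\<bar>j * m / N\<bar> \<le> \<bar>m\<bar>"
        using \<open>j < N\<close> by (simp add: abs_mult field_simps mult_left_mono)
      ultimately show "\<bar>D j y\<bar> + \<bar>j * m / N\<bar> \<le> C"
        unfolding C_def by linarith
    qed
    finally show ?thesis .
  qed
  have "\<forall>\<^sub>F n in sequentially. C / n < \<epsilon> \<and> n > 0"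
    using order_tendstoD(2)[OF lim_const_over_n \<open>\<epsilon> > 0\<close>] eventually_gt_at_top
    by (rule eventually_conj)
  then show ?thesis
  proof (rule eventually_mono)
    fix n :: nat assume "C / n < \<epsilon> \<and> n > 0"
    moreover have "D n y / n - m / N = (D n y - n * m / N) / n"
      using \<open>C / n < \<epsilon> \<and> n > 0\<close> by (simp add: field_simps)
    then have "\<bar>D n y / n - m / N\<bar> = \<bar>D n y - n * m / N\<bar> / n"
      by simp
    ultimately show "\<bar>D n y / n - m / N\<bar> \<le> 2 * \<epsilon>"
      using divide_right_mono[OF bound[of n], of n] by (simp add: add_divide_distrib)
  qed
qed

lemma common_limit_of_uniform_approx:
  fixes f :: "nat \<Rightarrow> 'a \<Rightarrow> real"
  assumes approx: "\<And>\<epsilon>. \<epsilon> > 0 \<Longrightarrow> \<exists>r. \<forall>y\<in>P. \<forall>\<^sub>F n in sequentially. \<bar>f n y - r\<bar> \<le> \<epsilon>"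
  shows "\<exists>\<alpha>. \<forall>y\<in>P. (\<lambda>n. f n y) \<longlonglongrightarrow> \<alpha>"
proof -
  have "convergent (\<lambda>n. f n y)" if "y \<in> P" for y
    unfolding Cauchy_convergent_iff[symmetric]
  proof (rule CauchyI)
    fix e :: real assume "e > 0"
    then obtain r where "\<forall>z\<in>P. \<forall>\<^sub>F n in sequentially. \<bar>f n z - r\<bar> \<le> e / 3"
      using approx[of "e / 3"] by auto
    then have "\<forall>\<^sub>F n in sequentially. \<bar>f n y - r\<bar> \<le> e / 3"
      using that by blast
    then obtain M where M: "\<forall>n\<ge>M. \<bar>f n y - r\<bar> \<le> e / 3"
      unfolding eventually_sequentially by blast
    have "norm (f a y - f b y) < e" if "a \<ge> M" "b \<ge> M" for a b
    proof -
      have "\<bar>f a y - r\<bar> \<le> e / 3" "\<bar>f b y - r\<bar> \<le> e / 3"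
        using M that by auto
      then show ?thesis using \<open>e > 0\<close> by (simp only: real_norm_def)
    qed
    then show "\<exists>M. \<forall>a\<ge>M. \<forall>b\<ge>M. norm (f a y - f b y) < e" by blast
  qed
  then obtain L where L: "\<And>y. y \<in> P \<Longrightarrow> (\<lambda>n. f n y) \<longlonglongrightarrow> L y"
    unfolding convergent_def by metis
  have "L y = L y'" if "y \<in> P" "y' \<in> P" for y y'
  proof -
    have "\<bar>L y - L y'\<bar> \<le> e" if "e > 0" for e
    proof -
      obtain r where r: "\<forall>z\<in>P. \<forall>\<^sub>F n in sequentially. \<bar>f n z - r\<bar> \<le> e / 2"
        using approx[of "e / 2"] \<open>e > 0\<close> by auto
      have close: "\<bar>L z - r\<bar> \<le> e / 2" if "z \<in> P" for z
        using Lim_norm_ubound[OF trivial_limit_sequentially tendsto_diff[OF L[OF that] tendsto_const]] r that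
        unfolding real_norm_def by blast
      show ?thesis
        using close[OF \<open>y \<in> P\<close>] close[OF \<open>y' \<in> P\<close>] by linarith
    qed
    then show ?thesis
      using field_le_epsilon[of "\<bar>L y - L y'\<bar>" 0] by simp
  qed
  then show ?thesis
    using L by (metis empty_iff equals0I)
qed

lemma uniformly_rigid_lift_rotation_approx:
  assumes rigid: "uniformly_rigid_on \<Psi> H" and "H ` \<Psi> \<subseteq> \<Psi>"
    and "continuous_on S Ht" and HtS: "Ht ` S \<subseteq> S"
    and lift: "\<And>y. y \<in> S \<Longrightarrow> ann_q (Ht y) = H (ann_q y)"
    and "connected {y \<in> S. ann_q y \<in> \<Psi>}" and "\<epsilon> > 0"
  shows "\<exists>r. \<forall>y \<in> {y \<in> S. ann_q y \<in> \<Psi>}.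
           \<forall>\<^sub>F n in sequentially. \<bar>(snd ((Ht ^^ n) y) - snd y) / n - r\<bar> \<le> \<epsilon>"
proof -
  define P where "P = {y \<in> S. ann_q y \<in> \<Psi>}"
  define D where "D = (\<lambda>n y. snd ((Ht ^^ n) y) - snd y)"
  have inv: "Ht ` P \<subseteq> P"
    using HtS lift \<open>H ` \<Psi> \<subseteq> \<Psi>\<close> unfolding P_def by auto
  have cocycle: "D (a + b) y = D a ((Ht ^^ b) y) + D b y" for a b y
    unfolding D_def by (simp add: funpow_add)
  have conn: "connected (D N ` P)" for N
  proof (rule connected_continuous_image)
    have "continuous_on P (Ht ^^ N)"
      by (rule continuous_on_subset[OF continuous_on_funpow[OF \<open>continuous_on S Ht\<close> HtS]])
        (auto simp: P_def)
    then show "continuous_on P (D N)"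
      unfolding D_def by (intro continuous_intros)
    show "connected P"
      using \<open>connected {y \<in> S. ann_q y \<in> \<Psi>}\<close> unfolding P_def .
  qed
  define \<delta> where "\<delta> = min (\<epsilon> / 2) (1 / 2)"
  have "\<delta> > 0" "\<delta> \<le> 1 / 2" "2 * \<delta> \<le> \<epsilon>"
    using \<open>\<epsilon> > 0\<close> by (auto simp: \<delta>_def)
  obtain N where N: "N \<ge> 1"
    and near: "\<And>w. w \<in> S \<Longrightarrow> ann_q w \<in> \<Psi> \<Longrightarrow> circ_dist (snd ((Ht ^^ N) w)) (snd w) < \<delta>"
    using uniformly_rigid_lift_near_integer[OF rigid HtS lift \<open>\<delta> > 0\<close>] by blast
  have "\<forall>w\<in>P. \<bar>D N w - of_int (round (D N w))\<bar> < \<delta>"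
    using near unfolding circ_dist_def D_def P_def by simp
  then obtain m :: int where "\<forall>w\<in>P. \<bar>D N w - of_int m\<bar> < \<delta>"
    using connected_image_near_integer[OF conn _ \<open>\<delta> \<le> 1 / 2\<close>] by blast
  then have block: "\<forall>w\<in>P. \<bar>D N w - of_int m\<bar> \<le> \<delta>"
    by (simp add: less_imp_le)
  have "\<forall>\<^sub>F n in sequentially. \<bar>D n y / n - of_int m / N\<bar> \<le> \<epsilon>" if "y \<in> P" for y
    using cocycle_average_approx[OF cocycle inv N block that \<open>\<delta> > 0\<close>]
    by (rule eventually_mono) (use \<open>2 * \<delta> \<le> \<epsilon>\<close> in linarith)
  then show ?thesis
    unfolding P_def D_def by (intro exI[of _ "of_int m / N"]) blast
qed

theorem corollary2p5:
  fixes H Ht :: "real \<times> real \<Rightarrow> real \<times> real" and \<Psi> :: "(real \<times> real) set"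
  assumes "homeomorphic_map ann_top ann_top H"
    and "closedin ann_top \<Psi>"
    and "H ` \<Psi> = \<Psi>"
    and "continuous_on ({0..1} \<times> UNIV) Ht"
    and "Ht ` ({0..1} \<times> UNIV) \<subseteq> {0..1} \<times> UNIV"
    and "\<forall>y \<in> {0..1} \<times> UNIV. ann_q (Ht y) = H (ann_q y)"
    and "uniformly_rigid_on \<Psi> H"
    and "connected {y \<in> {0..1} \<times> UNIV. ann_q y \<in> \<Psi>}"
  shows "\<exists>\<alpha>::real. \<forall>y \<in> {y \<in> {0..1} \<times> UNIV. ann_q y \<in> \<Psi>}.
           (\<lambda>n. (snd ((Ht ^^ n) y) - snd y) / real n) \<longlonglongrightarrow> \<alpha>"
proof -
  have "\<exists>r. \<forall>y \<in> {y \<in> {0..1} \<times> UNIV. ann_q y \<in> \<Psi>}.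
      \<forall>\<^sub>F n in sequentially. \<bar>(snd ((Ht ^^ n) y) - snd y) / n - r\<bar> \<le> \<epsilon>" if "\<epsilon> > 0" for \<epsilon>
    using assms(3-8) that by (intro uniformly_rigid_lift_rotation_approx) auto
  then show ?thesis
    by (rule common_limit_of_uniform_approx)
qed

end
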